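(* For all integers $d,n\geq 1$, the tangential variety $\tau_{d,n}\subset\mathbb{P}\mathrm{Sym}^d\mathbb{C}^{n+1}$ to the degree-$d$ Veronese embedding of $\mathbb{P}^n$ is strongly concise with respect to the monomial coordinates. Explicitly: for every multi-index $\alpha\in\mathbb{Z}_{\ge0}^{n+1}$ with $|\alpha|=d$ there exist linear forms $L,M$ in $x_0,\dots,x_n$ such that in $L^{d-1}M$ the coefficient of $\mathbf{x}^\alpha$ is zero and the coefficients of all other monomials of degree $d$ are nonzero.
   Context: $\mathbb{P}\mathrm{Sym}^d\mathbb{C}^{n+1}$ is identified with the projective space of degree-$d$ homogeneous polynomials in $x_0,\dots,x_n$, with projective coordinates given by the coefficients of the monomials $\mathbf{x}^\alpha=x_0^{\alpha_0}\cdots x_n^{\alpha_n}$, $|\alpha|=d$. The tangential variety is $\tau_{d,n}=\overline{\{[L^{d-1}M]: L,M \text{ linear forms}\}}$. A variety $X$ in a projective space with coordinate hyperplanes $H_i$ is strongly concise if for every $i$, $(X\cap H_i)\not\subset\bigcup_{j\ne i}H_j$. *)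

theory Defs
  imports Complex_Main "HOL-Library.Poly_Mapping"
begin

(* Multivariate polynomials over C in variables x_0, x_1, ...: a monomial x^alpha is a
   finitely supported exponent vector, a polynomial a finitely supported map from
   monomials to coefficients; multiplication is the library convolution product. *)

type_synonym mpoly_c = "(nat \<Rightarrow>\<^sub>0 nat) \<Rightarrow>\<^sub>0 complex"

definition linform :: "nat \<Rightarrow> (nat \<Rightarrow> complex) \<Rightarrow> mpoly_c" where
  "linform n c = (\<Sum>i\<le>n. Poly_Mapping.single (Poly_Mapping.single i 1) (c i))"

definition monomials_deg :: "nat \<Rightarrow> nat \<Rightarrow> (nat \<Rightarrow>\<^sub>0 nat) set" where
  "monomials_deg n d = {\<alpha>. Poly_Mapping.keys \<alpha> \<subseteq> {..n} \<and> (\<Sum>i\<le>n. Poly_Mapping.lookup \<alpha> i) = d}"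

end

theory Submission imports Defs begin

(* Take L = x_0 + ... + x_n and M = w_0 x_0 + ... + w_n x_n. By the multinomial theorem the
   coefficient of x^beta in L^(d-1) M is (d-1)!/beta! * (beta_0 w_0 + ... + beta_n w_n), a nonzero
   multiple of a linear functional in the exponent vector. With N = d + 1, S = sum alpha_i N^i and
   w_i = d N^i - S, this functional equals d (sum beta_i N^i - S) on monomials of degree d, and it
   vanishes only at beta = alpha because base-N expansions with digits below N are unique. *)

abbreviation var_exp :: "nat \<Rightarrow> (nat \<Rightarrow>\<^sub>0 nat)" where
  "var_exp i \<equiv> Poly_Mapping.single i 1"

lemma lookup_diff_nat:
  "Poly_Mapping.lookup (f - g) k = Poly_Mapping.lookup f k - Poly_Mapping.lookup (g :: 'a \<Rightarrow>\<^sub>0 nat) k"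
  by (simp add: minus_poly_mapping.rep_eq)

(* One_nat_def is a simp rule, so simp turns var_exp i into single i (Suc 0) before this lemma
   can fire; below it is therefore passed as a premise, which simp normalises alike. *)
lemma lookup_minus_var_exp:
  "Poly_Mapping.lookup (\<beta> - var_exp i) j =
     (if j = i then Poly_Mapping.lookup \<beta> i - 1 else Poly_Mapping.lookup \<beta> j)"
  by (simp add: lookup_diff_nat lookup_single)

lemma eq_add_var_exp_iff:
  "\<beta> = \<gamma> + var_exp i \<longleftrightarrow> Poly_Mapping.lookup \<beta> i \<noteq> 0 \<and> \<gamma> = \<beta> - var_exp i"
  by (auto intro!: poly_mapping_eqI simp: lookup_add lookup_diff_nat lookup_single when_def)

lemma lookup_mult_single_var_exp:
  fixes Q :: "(nat \<Rightarrow>\<^sub>0 nat) \<Rightarrow>\<^sub>0 'a::semiring_0"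
  shows "Poly_Mapping.lookup (Q * Poly_Mapping.single (var_exp i) c) \<beta> =
    (if Poly_Mapping.lookup \<beta> i \<noteq> 0 then Poly_Mapping.lookup Q (\<beta> - var_exp i) * c else 0)"
proof -
  have "Poly_Mapping.lookup (Q * Poly_Mapping.single (var_exp i) c) \<beta> =
      (\<Sum>\<gamma>. Poly_Mapping.lookup Q \<gamma> * c when \<beta> = \<gamma> + var_exp i)"
  proof -
    have "(\<Sum>q. c when var_exp i = q when \<beta> = \<gamma> + q) = (c when \<beta> = \<gamma> + var_exp i)" for \<gamma>
      by (simp only: when_commute[of c] Sum_any_when_equal')
    then show ?thesis
      by (simp only: lookup_mult lookup_single mult_when)
  qed
  also have "\<dots> = (\<Sum>\<gamma>. (Poly_Mapping.lookup Q \<gamma> * c when Poly_Mapping.lookup \<beta> i \<noteq> 0)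
                       when \<gamma> = \<beta> - var_exp i)"
    by (rule Sum_any.cong) (simp only: eq_add_var_exp_iff when_when)
  finally show ?thesis
    by (simp add: when_def)
qed

lemma lookup_mult_linform:
  "Poly_Mapping.lookup (Q * linform n w) \<beta> =
    (\<Sum>i\<le>n. if Poly_Mapping.lookup \<beta> i \<noteq> 0 then Poly_Mapping.lookup Q (\<beta> - var_exp i) * w i else 0)"
  by (simp only: linform_def sum_distrib_left lookup_sum lookup_mult_single_var_exp)

definition multinomial_coeff :: "nat \<Rightarrow> nat \<Rightarrow> (nat \<Rightarrow>\<^sub>0 nat) \<Rightarrow> complex" where
  "multinomial_coeff n k \<beta> =
     (if \<beta> \<in> monomials_deg n k then fact k / (\<Prod>j\<le>n. fact (Poly_Mapping.lookup \<beta> j)) else 0)"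

lemma monomials_deg_0: "monomials_deg n 0 = {0}"
  by (auto simp: monomials_deg_def intro!: poly_mapping_eqI) (metis in_keys_iff subsetD)

lemma minus_var_exp_in_monomials_deg_iff:
  assumes "i \<le> n" "Poly_Mapping.lookup \<beta> i \<noteq> 0"
  shows "\<beta> - var_exp i \<in> monomials_deg n k \<longleftrightarrow> \<beta> \<in> monomials_deg n (Suc k)"
proof -
  have "Poly_Mapping.keys \<beta> = insert i (Poly_Mapping.keys (\<beta> - var_exp i))"
    using assms(2) lookup_minus_var_exp[of \<beta> i] by (auto simp: in_keys_iff split: if_splits)
  then have "Poly_Mapping.keys (\<beta> - var_exp i) \<subseteq> {..n} \<longleftrightarrow> Poly_Mapping.keys \<beta> \<subseteq> {..n}"
    using assms(1) by simp
  moreover have "(\<Sum>j\<le>n. Poly_Mapping.lookup \<beta> j) =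
      Suc (\<Sum>j\<le>n. Poly_Mapping.lookup (\<beta> - var_exp i) j)"
  proof -
    have "(\<Sum>j\<in>{..n} - {i}. Poly_Mapping.lookup (\<beta> - var_exp i) j) =
        (\<Sum>j\<in>{..n} - {i}. Poly_Mapping.lookup \<beta> j)"
      by (rule sum.cong) (use lookup_minus_var_exp[of \<beta> i] in auto)
    moreover have "Poly_Mapping.lookup (\<beta> - var_exp i) i = Poly_Mapping.lookup \<beta> i - 1"
      unfolding lookup_minus_var_exp by simp
    ultimately show ?thesis
      using assms by (simp add: sum.remove[of "{..n}" i])
  qed
  ultimately show ?thesis
    by (simp add: monomials_deg_def)
qed

lemma prod_fact_minus_var_exp:
  assumes "i \<le> n" "Poly_Mapping.lookup \<beta> i \<noteq> 0"
  shows "(\<Prod>j\<le>n. fact (Poly_Mapping.lookup \<beta> j)) =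
    Poly_Mapping.lookup \<beta> i * (\<Prod>j\<le>n. fact (Poly_Mapping.lookup (\<beta> - var_exp i) j) :: nat)"
proof -
  let ?rest = "\<Prod>j\<in>{..n} - {i}. fact (Poly_Mapping.lookup \<beta> j) :: nat"
  have rest: "(\<Prod>j\<in>{..n} - {i}. fact (Poly_Mapping.lookup (\<beta> - var_exp i) j)) = ?rest"
    by (rule prod.cong) (use lookup_minus_var_exp[of \<beta> i] in auto)
  have "(\<Prod>j\<le>n. fact (Poly_Mapping.lookup (\<beta> - var_exp i) j)) =
      fact (Poly_Mapping.lookup (\<beta> - var_exp i) i) *
        (\<Prod>j\<in>{..n} - {i}. fact (Poly_Mapping.lookup (\<beta> - var_exp i) j))"
    using assms(1) by (simp only: prod.remove[of "{..n}" i] finite_atMost atMost_iff)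
  also have "\<dots> = fact (Poly_Mapping.lookup \<beta> i - 1) * ?rest"
    unfolding rest lookup_minus_var_exp[of \<beta> i i] by simp
  finally have minus: "(\<Prod>j\<le>n. fact (Poly_Mapping.lookup (\<beta> - var_exp i) j)) =
      fact (Poly_Mapping.lookup \<beta> i - 1) * ?rest" .
  have "(\<Prod>j\<le>n. fact (Poly_Mapping.lookup \<beta> j)) = fact (Poly_Mapping.lookup \<beta> i) * ?rest"
    using assms(1) by (simp add: prod.remove[of "{..n}" i])
  also have "\<dots> = Poly_Mapping.lookup \<beta> i * (fact (Poly_Mapping.lookup \<beta> i - 1) * ?rest)"
    using assms(2) by (simp add: fact_reduce[of "Poly_Mapping.lookup \<beta> i"])
  finally show ?thesis
    unfolding minus .
qed

lemma multinomial_coeff_minus_var_exp: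
  assumes "i \<le> n" "Poly_Mapping.lookup \<beta> i \<noteq> 0"
  shows "multinomial_coeff n k (\<beta> - var_exp i) =
    (if \<beta> \<in> monomials_deg n (Suc k)
     then of_nat (Poly_Mapping.lookup \<beta> i) * fact k / (\<Prod>j\<le>n. fact (Poly_Mapping.lookup \<beta> j))
     else 0)"
proof -
  have "(\<Prod>j\<le>n. fact (Poly_Mapping.lookup \<beta> j) :: complex) =
      of_nat (Poly_Mapping.lookup \<beta> i) * (\<Prod>j\<le>n. fact (Poly_Mapping.lookup (\<beta> - var_exp i) j))"
    using arg_cong[OF prod_fact_minus_var_exp[OF assms], of "of_nat :: nat \<Rightarrow> complex"]
    by (simp add: of_nat_prod)
  moreover have "(\<Prod>j\<le>n. fact (Poly_Mapping.lookup (\<beta> - var_exp i) j) :: complex) \<noteq> 0"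
    by simp
  ultimately show ?thesis
    using assms(2) unfolding multinomial_coeff_def minus_var_exp_in_monomials_deg_iff[OF assms] by simp
qed

lemma sum_multinomial_coeff_minus_var_exp:
  "(\<Sum>i\<le>n. if Poly_Mapping.lookup \<beta> i \<noteq> 0 then multinomial_coeff n k (\<beta> - var_exp i) * w i else 0) =
    (if \<beta> \<in> monomials_deg n (Suc k)
     then fact k / (\<Prod>j\<le>n. fact (Poly_Mapping.lookup \<beta> j)) * (\<Sum>i\<le>n. of_nat (Poly_Mapping.lookup \<beta> i) * w i)
     else 0)"
proof -
  have "(if Poly_Mapping.lookup \<beta> i \<noteq> 0 then multinomial_coeff n k (\<beta> - var_exp i) * w i else 0) =
    (if \<beta> \<in> monomials_deg n (Suc k)
     then fact k / (\<Prod>j\<le>n. fact (Poly_Mapping.lookup \<beta> j)) * (of_nat (Poly_Mapping.lookup \<beta> i) * w i)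
     else 0)" if "i \<le> n" for i
  proof (cases "Poly_Mapping.lookup \<beta> i = 0")
    case False
    with multinomial_coeff_minus_var_exp[OF that False, of k] show ?thesis
      by simp
  qed simp
  then show ?thesis
    by (simp add: sum_distrib_left)
qed

theorem lookup_linform_ones_power:
  "Poly_Mapping.lookup (linform n (\<lambda>_. 1) ^ k) \<beta> = multinomial_coeff n k \<beta>"
proof (induction k arbitrary: \<beta>)
  case 0
  then show ?case
    by (simp add: multinomial_coeff_def monomials_deg_0 lookup_one)
next
  case (Suc k)
  have "Poly_Mapping.lookup (linform n (\<lambda>_. 1) ^ Suc k) \<beta> =
    (if \<beta> \<in> monomials_deg n (Suc k)
     then fact k / (\<Prod>j\<le>n. fact (Poly_Mapping.lookup \<beta> j)) * (\<Sum>i\<le>n. of_nat (Poly_Mapping.lookup \<beta> i) * 1)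
     else 0)"
    unfolding power_Suc2 lookup_mult_linform Suc.IH sum_multinomial_coeff_minus_var_exp ..
  also have "\<dots> = multinomial_coeff n (Suc k) \<beta>"
    by (simp add: multinomial_coeff_def monomials_deg_def flip: of_nat_sum)
  finally show ?case .
qed

lemma lookup_linform_ones_power_mult_linform:
  assumes "\<beta> \<in> monomials_deg n (Suc k)"
  shows "Poly_Mapping.lookup (linform n (\<lambda>_. 1) ^ k * linform n w) \<beta> =
    fact k / (\<Prod>j\<le>n. fact (Poly_Mapping.lookup \<beta> j)) * (\<Sum>i\<le>n. of_nat (Poly_Mapping.lookup \<beta> i) * w i)"
  using assms
  unfolding lookup_mult_linform lookup_linform_ones_power sum_multinomial_coeff_minus_var_exp by simp

lemma sum_monomials_deg_shifted_weights:
  fixes u :: "nat \<Rightarrow> 'a::comm_ring_1"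
  assumes "\<beta> \<in> monomials_deg n d"
  shows "(\<Sum>i\<le>n. of_nat (Poly_Mapping.lookup \<beta> i) * (of_nat d * u i - c)) =
    of_nat d * ((\<Sum>i\<le>n. of_nat (Poly_Mapping.lookup \<beta> i) * u i) - c)"
proof -
  have "(\<Sum>i\<le>n. of_nat (Poly_Mapping.lookup \<beta> i) :: 'a) = of_nat d"
    using assms by (simp add: monomials_deg_def flip: of_nat_sum)
  moreover have "(\<Sum>i\<le>n. of_nat (Poly_Mapping.lookup \<beta> i) * (of_nat d * u i - c)) =
      of_nat d * (\<Sum>i\<le>n. of_nat (Poly_Mapping.lookup \<beta> i) * u i) - (\<Sum>i\<le>n. of_nat (Poly_Mapping.lookup \<beta> i)) * c"
    by (simp add: algebra_simps sum_subtractf sum_distrib_left sum_distrib_right)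
  ultimately show ?thesis
    by (simp add: algebra_simps)
qed

lemma base_expansion_digits_unique:
  fixes a b :: "nat \<Rightarrow> nat"
  assumes "\<forall>i\<le>n. a i < N" "\<forall>i\<le>n. b i < N"
    and "(\<Sum>i\<le>n. a i * N ^ i) = (\<Sum>i\<le>n. b i * N ^ i)"
  shows "\<forall>i\<le>n. a i = b i"
  using assms
proof (induction n arbitrary: a b)
  case 0
  then show ?case by simp
next
  case (Suc n)
  have expand: "(\<Sum>i\<le>Suc n. f i * N ^ i) = f 0 + N * (\<Sum>i\<le>n. f (Suc i) * N ^ i)" for f :: "nat \<Rightarrow> nat"
    unfolding sum.atMost_Suc_shift by (simp add: sum_distrib_left mult.left_commute)
  have a0: "a 0 < N" and b0: "b 0 < N"
    using Suc.prems(1,2) by auto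
  have eq: "a 0 + N * (\<Sum>i\<le>n. a (Suc i) * N ^ i) = b 0 + N * (\<Sum>i\<le>n. b (Suc i) * N ^ i)"
    using Suc.prems(3) unfolding expand .
  then have "(a 0 + N * (\<Sum>i\<le>n. a (Suc i) * N ^ i)) mod N = (b 0 + N * (\<Sum>i\<le>n. b (Suc i) * N ^ i)) mod N"
    by (rule arg_cong)
  with a0 b0 have head: "a 0 = b 0"
    by simp
  with eq a0 have "(\<Sum>i\<le>n. a (Suc i) * N ^ i) = (\<Sum>i\<le>n. b (Suc i) * N ^ i)"
    by simp
  then have tail: "\<forall>i\<le>n. a (Suc i) = b (Suc i)"
    by (rule Suc.IH[rotated 2]) (use Suc.prems(1,2) in simp_all)
  show ?case
  proof (intro allI impI)
    fix i
    assume "i \<le> Suc n"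
    with head tail show "a i = b i"
      by (cases i) auto
  qed
qed

lemma monomials_deg_lookup_eq_0:
  assumes "\<beta> \<in> monomials_deg n d" "n < i"
  shows "Poly_Mapping.lookup \<beta> i = 0"
proof -
  from assms have "i \<notin> Poly_Mapping.keys \<beta>"
    by (auto simp: monomials_deg_def)
  then show ?thesis
    by (simp add: in_keys_iff)
qed

lemma monomials_deg_lookup_le:
  assumes "\<beta> \<in> monomials_deg n d"
  shows "Poly_Mapping.lookup \<beta> i \<le> d"
proof (cases "i \<le> n")
  case True
  then show ?thesis
    using assms member_le_sum[of i "{..n}" "Poly_Mapping.lookup \<beta>"] by (simp add: monomials_deg_def)
qed (simp add: monomials_deg_lookup_eq_0[OF assms])

lemma inj_on_base_expansion_monomials_deg:
  assumes "d < N"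
  shows "inj_on (\<lambda>\<beta>. \<Sum>i\<le>n. Poly_Mapping.lookup \<beta> i * N ^ i) (monomials_deg n d)"
proof (rule inj_onI)
  fix \<beta> \<gamma>
  assume \<beta>: "\<beta> \<in> monomials_deg n d" and \<gamma>: "\<gamma> \<in> monomials_deg n d"
    and eq: "(\<Sum>i\<le>n. Poly_Mapping.lookup \<beta> i * N ^ i) = (\<Sum>i\<le>n. Poly_Mapping.lookup \<gamma> i * N ^ i)"
  have "\<forall>i\<le>n. Poly_Mapping.lookup \<beta> i < N" "\<forall>i\<le>n. Poly_Mapping.lookup \<gamma> i < N"
    using monomials_deg_lookup_le[OF \<beta>] monomials_deg_lookup_le[OF \<gamma>] assms by (auto intro: le_less_trans)
  then have digits: "\<forall>i\<le>n. Poly_Mapping.lookup \<beta> i = Poly_Mapping.lookup \<gamma> i"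
    using eq by (rule base_expansion_digits_unique)
  have "Poly_Mapping.lookup \<beta> i = Poly_Mapping.lookup \<gamma> i" for i
  proof (cases "i \<le> n")
    case False
    with \<beta> \<gamma> show ?thesis
      by (simp add: monomials_deg_lookup_eq_0)
  qed (use digits in simp)
  then show "\<beta> = \<gamma>"
    by (rule poly_mapping_eqI)
qed

theorem mainTheorem8:
  fixes d n :: nat and \<alpha> :: "nat \<Rightarrow>\<^sub>0 nat"
  assumes "d \<ge> 1" and "n \<ge> 1" and "\<alpha> \<in> monomials_deg n d"
  shows "\<exists>l m :: nat \<Rightarrow> complex.
           Poly_Mapping.lookup (linform n l ^ (d - 1) * linform n m) \<alpha> = 0 \<and>
           (\<forall>\<beta>\<in>monomials_deg n d. \<beta> \<noteq> \<alpha> \<longrightarrow>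
              Poly_Mapping.lookup (linform n l ^ (d - 1) * linform n m) \<beta> \<noteq> 0)"
proof -
  obtain k where d: "d = Suc k"
    using assms(1) by (cases d) auto
  define enc where "enc \<beta> = (\<Sum>i\<le>n. Poly_Mapping.lookup \<beta> i * Suc d ^ i)" for \<beta>
  define w :: "nat \<Rightarrow> complex" where "w i = of_nat d * of_nat (Suc d ^ i) - of_nat (enc \<alpha>)" for i
  have coeff: "Poly_Mapping.lookup (linform n (\<lambda>_. 1) ^ (d - 1) * linform n w) \<beta> =
      fact k / (\<Prod>j\<le>n. fact (Poly_Mapping.lookup \<beta> j)) * (of_nat d * (of_nat (enc \<beta>) - of_nat (enc \<alpha>)))"
    if "\<beta> \<in> monomials_deg n d" for \<beta>
  proof -
    have "Poly_Mapping.lookup (linform n (\<lambda>_. 1) ^ (d - 1) * linform n w) \<beta> =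
        fact k / (\<Prod>j\<le>n. fact (Poly_Mapping.lookup \<beta> j)) * (\<Sum>i\<le>n. of_nat (Poly_Mapping.lookup \<beta> i) * w i)"
      using lookup_linform_ones_power_mult_linform[of \<beta> n k w] that by (simp add: d)
    also have "(\<Sum>i\<le>n. of_nat (Poly_Mapping.lookup \<beta> i) * w i) = of_nat d * (of_nat (enc \<beta>) - of_nat (enc \<alpha>))"
      unfolding w_def sum_monomials_deg_shifted_weights[OF that] by (simp add: enc_def)
    finally show ?thesis .
  qed
  have "enc \<beta> \<noteq> enc \<alpha>" if "\<beta> \<in> monomials_deg n d" "\<beta> \<noteq> \<alpha>" for \<beta>
    using inj_on_base_expansion_monomials_deg[of d "Suc d" n] that assms(3)
    unfolding enc_def inj_on_def by blast
  then show ?thesis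
    using coeff assms(1,3) by (intro exI[of _ "\<lambda>_. 1"] exI[of _ w]) simp
qed

end
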